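(* For a dcpo $P$ the following are equivalent: (1) $\Sigma P$ is a $d^{\ast}$-space; (2) for every $x\in P$ and every Scott closed set $C\neq P$, the set ${\downarrow}({\uparrow}x\cap C)$ is Scott closed; (3) for every $K\in K(\Sigma P)$ and every Scott closed set $C\neq P$, the set ${\downarrow}(K\cap C)$ is Scott closed; (4) $\Sigma P$ is $S^{\ast}$-well-filtered.
   Context: A dcpo is a poset in which every directed subset has a supremum. $\Sigma P$ is $P$ with the Scott topology (a set $U$ is Scott open if $U={\uparrow}U$ and every directed $D$ with $\bigvee D\in U$ meets $U$; Scott closed sets are the complements); its specialization order is the order of $P$. For a space $X$, ${\uparrow},{\downarrow}$ are taken in the specialization order ($x\le y$ iff $x\in cl\{y\}$); $K(X)$ is the set of nonempty compact saturated (= upper) subsets; a family in $K(X)$ is filtered if any two members contain a common member. $X$ is a $d^{\ast}$-space if for every directed $D\subseteq X$, every $x\in X$ and every nonempty open $U$, $\bigcap_{d\in D}{\uparrow}d\cap{\uparrow}x\subseteq U$ implies ${\uparrow}d\cap{\uparrow}x\subseteq U$ for some $d\in D$. $X$ is $S^{\ast}$-well-filtered if for every filtered family $\{K_i\mid i\in I\}\subseteq K(X)$, every $G\in K(X)$ and every nonempty open $U$, $\bigcap_{i}K_i\cap G\subseteq U$ implies $K_i\cap G\subseteq U$ for some $i$. *)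

theory Defs
  imports "HOL-Analysis.Analysis"
begin

definition directed :: "'a::order set \<Rightarrow> bool" where
  "directed D \<longleftrightarrow> D \<noteq> {} \<and> (\<forall>a\<in>D. \<forall>b\<in>D. \<exists>c\<in>D. a \<le> c \<and> b \<le> c)"

definition is_sup :: "'a::order set \<Rightarrow> 'a \<Rightarrow> bool" where
  "is_sup D s \<longleftrightarrow> (\<forall>d\<in>D. d \<le> s) \<and> (\<forall>u. (\<forall>d\<in>D. d \<le> u) \<longrightarrow> s \<le> u)"

definition dcpo :: "'a::order itself \<Rightarrow> bool" where
  "dcpo _ \<longleftrightarrow> (\<forall>D::'a set. directed D \<longrightarrow> (\<exists>s. is_sup D s))"

definition upper :: "'a::order set \<Rightarrow> 'a set" where
  "upper A = {y. \<exists>a\<in>A. a \<le> y}"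

definition lower :: "'a::order set \<Rightarrow> 'a set" where
  "lower A = {y. \<exists>a\<in>A. y \<le> a}"

definition scott_open :: "'a::order set \<Rightarrow> bool" where
  "scott_open U \<longleftrightarrow> upper U = U \<and>
     (\<forall>D s. directed D \<and> is_sup D s \<and> s \<in> U \<longrightarrow> D \<inter> U \<noteq> {})"

lemma istopology_scott_open: "istopology (scott_open :: 'a::order set \<Rightarrow> bool)"
  unfolding istopology_def
proof (intro conjI allI impI)
  fix S T :: "'a set" assume S: "scott_open S" and T: "scott_open T"
  show "scott_open (S \<inter> T)"
    unfolding scott_open_def
  proof (intro conjI allI impI)
    show "upper (S \<inter> T) = S \<inter> T"
      using S T unfolding scott_open_def upper_def by auto
  next
    fix D s assume H: "directed D \<and> is_sup D s \<and> s \<in> S \<inter> T"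
    then obtain a b where a: "a \<in> D \<inter> S" and b: "b \<in> D \<inter> T"
      using S T unfolding scott_open_def by blast
    then obtain c where c: "c \<in> D" "a \<le> c" "b \<le> c"
      using H unfolding directed_def by blast
    have "c \<in> S" using S a c unfolding scott_open_def upper_def by blast
    moreover have "c \<in> T" using T b c unfolding scott_open_def upper_def by blast
    ultimately show "D \<inter> (S \<inter> T) \<noteq> {}" using c by blast
  qed
next
  fix K :: "'a set set" assume K: "\<forall>S\<in>K. scott_open S"
  show "scott_open (\<Union>K)"
    unfolding scott_open_def
  proof (intro conjI allI impI)
    show "upper (\<Union>K) = \<Union>K"
      using K unfolding scott_open_def upper_def by blast
  next
    fix D s assume "directed D \<and> is_sup D s \<and> s \<in> \<Union>K"
    then show "D \<inter> \<Union>K \<noteq> {}" using K unfolding scott_open_def by blast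
  qed
qed

definition scott_topology :: "'a::order topology" where
  "scott_topology = topology scott_open"

lemma openin_scott_topology: "openin (scott_topology :: 'a::order topology) U \<longleftrightarrow> scott_open U"
  unfolding scott_topology_def
  by (metis topology_inverse' istopology_scott_open)

definition spec_le :: "'a topology \<Rightarrow> 'a \<Rightarrow> 'a \<Rightarrow> bool" where
  "spec_le X x y \<longleftrightarrow> x \<in> topspace X \<and> y \<in> topspace X \<and> x \<in> X closure_of {y}"

definition sup_X :: "'a topology \<Rightarrow> 'a set \<Rightarrow> 'a set" where
  "sup_X X A = {y \<in> topspace X. \<exists>a\<in>A. spec_le X a y}"

definition directed_in :: "'a topology \<Rightarrow> 'a set \<Rightarrow> bool" where
  "directed_in X D \<longleftrightarrow> D \<subseteq> topspace X \<and> D \<noteq> {} \<and>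
     (\<forall>a\<in>D. \<forall>b\<in>D. \<exists>c\<in>D. spec_le X a c \<and> spec_le X b c)"

text \<open>K(X): nonempty compact saturated (= upper) subsets.\<close>
definition KX :: "'a topology \<Rightarrow> 'a set set" where
  "KX X = {K. K \<noteq> {} \<and> K \<subseteq> topspace X \<and> compactin X K \<and> sup_X X K = K}"

definition d_star_space :: "'a topology \<Rightarrow> bool" where
  "d_star_space X \<longleftrightarrow>
     (\<forall>D x U. directed_in X D \<and> x \<in> topspace X \<and> openin X U \<and> U \<noteq> {} \<and>
        (\<Inter>d\<in>D. sup_X X {d}) \<inter> sup_X X {x} \<subseteq> U
        \<longrightarrow> (\<exists>d\<in>D. sup_X X {d} \<inter> sup_X X {x} \<subseteq> U))"

definition filtered_family :: "'a set set \<Rightarrow> bool" where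
  "filtered_family \<K> \<longleftrightarrow> \<K> \<noteq> {} \<and>
     (\<forall>K1\<in>\<K>. \<forall>K2\<in>\<K>. \<exists>K3\<in>\<K>. K3 \<subseteq> K1 \<and> K3 \<subseteq> K2)"

definition S_star_well_filtered :: "'a topology \<Rightarrow> bool" where
  "S_star_well_filtered X \<longleftrightarrow>
     (\<forall>\<K> G U. \<K> \<subseteq> KX X \<and> filtered_family \<K> \<and> G \<in> KX X \<and> openin X U \<and> U \<noteq> {} \<and>
        \<Inter>\<K> \<inter> G \<subseteq> U \<longrightarrow> (\<exists>K\<in>\<K>. K \<inter> G \<subseteq> U))"

end

theory Submission
  imports Defs
begin

text \<open>For a Scott open \<open>U = - C\<close> and \<open>s = sup D\<close>, \<open>(\<Inter>d\<in>D. upper {d}) \<inter> upper {x} \<subseteq> U\<close> says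
  \<open>s \<notin> lower (upper {x} \<inter> C)\<close>, and \<open>upper {d} \<inter> upper {x} \<subseteq> U\<close> says
  \<open>d \<notin> lower (upper {x} \<inter> C)\<close>. So the \<open>d\<^sup>*\<close> condition says precisely that these lower sets are
  closed under directed suprema, i.e. Scott closed. Compactness upgrades \<open>upper {x}\<close> to an
  arbitrary compact saturated \<open>K\<close>. For \<open>S\<^sup>*\<close>-well-filteredness, if every \<open>K\<^sub>i \<inter> G\<close> meets \<open>C\<close>,
  Zorn's lemma gives a minimal Scott closed \<open>F \<subseteq> lower (G \<inter> C)\<close> meeting every \<open>K\<^sub>i\<close>. The
  closedness of the sets \<open>lower (K \<inter> F)\<close> and minimality make \<open>F\<close> directed with supremum in
  every \<open>K\<^sub>i\<close>; above it lies a point of \<open>(\<Inter>i. K\<^sub>i) \<inter> G \<inter> C\<close>. Conversely, \<open>S\<^sup>*\<close>-well-filteredness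
  applied to the filtered family \<open>upper {d}\<close>, \<open>d \<in> D\<close>, is the \<open>d\<^sup>*\<close> condition.\<close>

lemma topspace_scott_topology [simp]: "topspace (scott_topology :: 'a::order topology) = UNIV"
proof -
  have "scott_open (UNIV :: 'a set)"
    unfolding scott_open_def upper_def directed_def by auto
  then show ?thesis
    using openin_subset openin_scott_topology by blast
qed

lemma closedin_scott_topology_Compl [simp]:
  "closedin (scott_topology :: 'a::order topology) (- U) \<longleftrightarrow> openin scott_topology U"
  by (simp add: closedin_def Compl_eq_Diff_UNIV double_diff)

lemma closedin_scott_topology:
  "closedin (scott_topology :: 'a::order topology) C \<longleftrightarrow>
     lower C \<subseteq> C \<and> (\<forall>D s. directed D \<and> D \<subseteq> C \<and> is_sup D s \<longrightarrow> s \<in> C)"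
proof -
  have "closedin (scott_topology :: 'a topology) C \<longleftrightarrow> scott_open (- C)"
    using closedin_scott_topology_Compl[of "- C"] by (simp add: openin_scott_topology)
  moreover have "upper (- C) = - C \<longleftrightarrow> lower C \<subseteq> C"
    unfolding upper_def lower_def by blast
  ultimately show ?thesis
    unfolding scott_open_def by blast
qed

lemma lower_lower_subset: "lower (lower A) \<subseteq> lower A"
  unfolding lower_def by (auto intro: order_trans)

lemma closedin_scott_topology_lower:
  "closedin (scott_topology :: 'a::order topology) (lower A) \<longleftrightarrow>
     (\<forall>D s. directed D \<and> D \<subseteq> lower A \<and> is_sup D s \<longrightarrow> s \<in> lower A)"
  using closedin_scott_topology lower_lower_subset by blast

lemma lower_subset_closedin_scott_topology:
  assumes "closedin (scott_topology :: 'a::order topology) C" and "A \<subseteq> C"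
  shows "lower A \<subseteq> C"
proof -
  have "lower A \<subseteq> lower C"
    using assms(2) unfolding lower_def by auto
  then show ?thesis
    using assms(1) closedin_scott_topology by blast
qed

lemma spec_le_scott_topology [simp]:
  "spec_le (scott_topology :: 'a::order topology) x y \<longleftrightarrow> x \<le> y"
proof
  assume "spec_le scott_topology x y"
  have "closedin (scott_topology :: 'a topology) (lower {y})"
    unfolding closedin_scott_topology lower_def is_sup_def by (auto intro: order_trans)
  moreover have "x \<in> scott_topology closure_of {y}"
    using \<open>spec_le scott_topology x y\<close> unfolding spec_le_def by simp
  ultimately have "x \<in> lower {y}"
    using closure_of_minimal[of "{y}" "lower {y}"] unfolding lower_def by auto
  then show "x \<le> y"
    unfolding lower_def by simp
next
  assume "x \<le> y"
  then show "spec_le scott_topology x y"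
    unfolding spec_le_def closure_of_def
    by (auto simp: openin_scott_topology scott_open_def upper_def)
qed

lemma sup_X_scott_topology [simp]: "sup_X (scott_topology :: 'a::order topology) A = upper A"
  unfolding sup_X_def upper_def by auto

lemma directed_in_scott_topology [simp]:
  "directed_in (scott_topology :: 'a::order topology) D \<longleftrightarrow> directed D"
  unfolding directed_in_def directed_def by auto

lemma KX_scott_topology:
  "K \<in> KX (scott_topology :: 'a::order topology) \<longleftrightarrow>
     K \<noteq> {} \<and> compactin scott_topology K \<and> upper K = K"
  unfolding KX_def by auto

lemma upper_singleton_in_KX: "upper {x} \<in> KX (scott_topology :: 'a::order topology)"
proof -
  have "compactin (scott_topology :: 'a topology) (upper {x})"
    unfolding compactin_def
  proof (intro conjI allI impI)
    fix \<U> assume \<U>: "(\<forall>U\<in>\<U>. openin (scott_topology :: 'a topology) U) \<and> upper {x} \<subseteq> \<Union>\<U>"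
    then obtain U where U: "U \<in> \<U>" "x \<in> U"
      unfolding upper_def by auto
    then have "upper U = U"
      using \<U> by (auto simp: openin_scott_topology scott_open_def)
    then have "upper {x} \<subseteq> U"
      using U unfolding upper_def by auto
    then show "\<exists>\<F>. finite \<F> \<and> \<F> \<subseteq> \<U> \<and> upper {x} \<subseteq> \<Union>\<F>"
      using U by (intro exI[of _ "{U}"]) auto
  qed auto
  moreover have "upper (upper {x}) = upper {x}"
    unfolding upper_def by (auto intro: order_trans)
  moreover have "upper {x} \<noteq> {}"
    unfolding upper_def by auto
  ultimately show ?thesis
    unfolding KX_scott_topology by auto
qed

lemma INT_upper_singleton_eq: "is_sup D s \<Longrightarrow> (\<Inter>d\<in>D. upper {d}) = upper {s}"
  unfolding is_sup_def upper_def by (auto intro: order_trans)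

lemma mem_if_upper_eq: "upper A = A \<Longrightarrow> a \<in> A \<Longrightarrow> a \<le> b \<Longrightarrow> b \<in> A"
  unfolding upper_def by blast

lemma mem_lower_upper_singleton_Int:
  "a \<in> lower (upper {b} \<inter> C) \<longleftrightarrow> (\<exists>c\<in>C. a \<le> c \<and> b \<le> c)"
  unfolding lower_def upper_def by auto

lemma upper_singleton_Int_subset_Compl:
  "upper {a} \<inter> B \<subseteq> - C \<longleftrightarrow> a \<notin> lower (B \<inter> C)"
  unfolding lower_def upper_def by auto

lemma directed_finite_upper_bound:
  assumes "directed D" "finite F" "F \<subseteq> D"
  shows "\<exists>u\<in>D. \<forall>f\<in>F. f \<le> u"
  using assms(2,3)
proof (induction F rule: finite_induct)
  case empty
  then show ?case
    using assms(1) unfolding directed_def by auto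
next
  case (insert a F)
  then obtain u where "u \<in> D" "\<forall>f\<in>F. f \<le> u"
    by auto
  moreover obtain c where "c \<in> D" "a \<le> c" "u \<le> c"
    using assms(1) insert.prems \<open>u \<in> D\<close> unfolding directed_def by blast
  ultimately show ?case
    by (metis insert_iff order_trans)
qed

lemma filtered_family_upper_singletons:
  assumes "directed D"
  shows "filtered_family ((\<lambda>d. upper {d}) ` D)"
  unfolding filtered_family_def
proof (intro conjI ballI)
  show "(\<lambda>d. upper {d}) ` D \<noteq> {}"
    using assms unfolding directed_def by blast
next
  fix K1 K2 assume "K1 \<in> (\<lambda>d. upper {d}) ` D" "K2 \<in> (\<lambda>d. upper {d}) ` D"
  then obtain a b where ab: "a \<in> D" "b \<in> D" "K1 = upper {a}" "K2 = upper {b}"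
    by blast
  then obtain c where c: "c \<in> D" "a \<le> c" "b \<le> c"
    using assms unfolding directed_def by blast
  then have "upper {c} \<subseteq> K1" "upper {c} \<subseteq> K2"
    using ab unfolding upper_def by (auto intro: order_trans)
  then show "\<exists>K3\<in>(\<lambda>d. upper {d}) ` D. K3 \<subseteq> K1 \<and> K3 \<subseteq> K2"
    using c by blast
qed

lemma compactin_directed_cover:
  fixes W :: "'i::order \<Rightarrow> 'a set"
  assumes "compactin X K" "directed D" "mono W"
    and "\<And>d. d \<in> D \<Longrightarrow> openin X (W d)" "K \<subseteq> \<Union> (W ` D)"
  obtains d where "d \<in> D" "K \<subseteq> W d"
proof -
  have "\<forall>U\<in>W ` D. openin X U"
    using assms(4) by blast
  then obtain \<F> where \<F>: "finite \<F>" "\<F> \<subseteq> W ` D" "K \<subseteq> \<Union>\<F>"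
    using assms(1,5) unfolding compactin_def by meson
  then obtain F where F: "F \<subseteq> D" "finite F" "\<F> = W ` F"
    by (meson finite_subset_image)
  obtain u where u: "u \<in> D" "\<forall>f\<in>F. f \<le> u"
    using directed_finite_upper_bound[OF assms(2) F(2,1)] by blast
  have "W f \<subseteq> W u" if "f \<in> F" for f
    using u(2) that monoD[OF assms(3)] by blast
  then have "K \<subseteq> W u"
    using \<F>(3) F(3) by blast
  then show ?thesis
    using that u(1) by blast
qed

text \<open>Zorn's lemma, applied to closed sets ordered by reverse inclusion: by the finite intersection
  property, the intersection of a chain of closed sets meeting a compact set still meets it.\<close>

lemma closedin_minimal_meeting_compacts:
  assumes compact: "\<And>K. K \<in> \<K> \<Longrightarrow> compactin X K"
    and "closedin X A" and "\<forall>K\<in>\<K>. A \<inter> K \<noteq> {}"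
  obtains F where "closedin X F" "F \<subseteq> A" "\<forall>K\<in>\<K>. F \<inter> K \<noteq> {}"
    "\<And>B. closedin X B \<Longrightarrow> B \<subseteq> F \<Longrightarrow> \<forall>K\<in>\<K>. B \<inter> K \<noteq> {} \<Longrightarrow> B = F"
proof -
  define \<B> where "\<B> = {B. closedin X B \<and> B \<subseteq> A \<and> (\<forall>K\<in>\<K>. B \<inter> K \<noteq> {})}"
  have "\<exists>F\<in>\<B>. \<forall>B\<in>\<B>. B \<subseteq> F \<longrightarrow> B = F"
  proof (rule predicate_Zorn)
    show "partial_order_on \<B> (relation_of (\<lambda>B B'. B' \<subseteq> B) \<B>)"
      by (rule partial_order_on_relation_ofI) auto
  next
    fix \<C> assume \<C>: "\<C> \<in> Chains (relation_of (\<lambda>B B'. B' \<subseteq> B) \<B>)"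
    then have "\<C> \<subseteq> \<B>"
      by (rule Chains_relation_of)
    have "subset.chain UNIV \<C>"
      using \<C> unfolding Chains_def relation_of_def subset_chain_def by blast
    show "\<exists>F\<in>\<B>. \<forall>B\<in>\<C>. F \<subseteq> B"
    proof (cases "\<C> = {}")
      case True
      then show ?thesis
        using assms(2,3) unfolding \<B>_def by auto
    next
      case False
      have "K \<inter> \<Inter>\<C> \<noteq> {}" if K: "K \<in> \<K>" for K
      proof -
        have "K \<inter> \<Inter>\<F> \<noteq> {}" if "finite \<F>" "\<F> \<subseteq> \<C>" for \<F>
        proof (cases "\<F> = {}")
          case True
          then show ?thesis
            using \<open>\<C> \<subseteq> \<B>\<close> \<open>\<C> \<noteq> {}\<close> K unfolding \<B>_def by auto
        next
          case False
          moreover have "subset.chain UNIV \<F>"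
            using \<open>subset.chain UNIV \<C>\<close> that(2) unfolding subset_chain_def by auto
          ultimately have "\<Inter>\<F> \<in> \<F>"
            using Inter_in_chain that(1) by blast
          then show ?thesis
            using that \<open>\<C> \<subseteq> \<B>\<close> K unfolding \<B>_def by blast
        qed
        moreover have "\<forall>C\<in>\<C>. closedin X C"
          using \<open>\<C> \<subseteq> \<B>\<close> unfolding \<B>_def by auto
        ultimately show ?thesis
          using compact[OF K] unfolding compactin_fip by blast
      qed
      moreover have "closedin X (\<Inter>\<C>)"
        using \<open>\<C> \<subseteq> \<B>\<close> False unfolding \<B>_def by (intro closedin_Inter) auto
      moreover have "\<Inter>\<C> \<subseteq> A"
        using \<open>\<C> \<subseteq> \<B>\<close> False unfolding \<B>_def by blast
      ultimately have "\<Inter>\<C> \<in> \<B>"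
        unfolding \<B>_def by (auto simp: Int_commute)
      then show ?thesis
        by blast
    qed
  qed
  then obtain F where F: "F \<in> \<B>" "\<And>B. B \<in> \<B> \<Longrightarrow> B \<subseteq> F \<Longrightarrow> B = F"
    by blast
  show ?thesis
  proof (rule that)
    show "closedin X F" "F \<subseteq> A" "\<forall>K\<in>\<K>. F \<inter> K \<noteq> {}"
      using F(1) unfolding \<B>_def by auto
    show "B = F" if "closedin X B" "B \<subseteq> F" "\<forall>K\<in>\<K>. B \<inter> K \<noteq> {}" for B
      using F(1) that \<open>F \<subseteq> A\<close> by (intro F(2)) (auto simp: \<B>_def)
  qed
qed

lemma d_star_space_scott_topology:
  "d_star_space (scott_topology :: 'a::order topology) \<longleftrightarrow>
    (\<forall>D (x::'a) U. directed D \<and> openin scott_topology U \<and> U \<noteq> {} \<and>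
        (\<Inter>d\<in>D. upper {d}) \<inter> upper {x} \<subseteq> U \<longrightarrow> (\<exists>d\<in>D. upper {d} \<inter> upper {x} \<subseteq> U))"
  unfolding d_star_space_def by simp

lemma d_star_space_iff_closedin_lower_upper_Int:
  assumes "dcpo TYPE('a::order)"
  shows "d_star_space (scott_topology :: 'a topology) \<longleftrightarrow>
    (\<forall>(x::'a) (C::'a set). closedin scott_topology C \<and> C \<noteq> UNIV
       \<longrightarrow> closedin scott_topology (lower (upper {x} \<inter> C)))"
proof (intro iffI allI impI)
  fix x :: 'a and C :: "'a set"
  assume d_star: "d_star_space (scott_topology :: 'a topology)"
    and C: "closedin scott_topology C \<and> C \<noteq> UNIV"
  show "closedin scott_topology (lower (upper {x} \<inter> C))"
    unfolding closedin_scott_topology_lower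
  proof (intro allI impI)
    fix D s assume D: "directed D \<and> D \<subseteq> lower (upper {x} \<inter> C) \<and> is_sup D s"
    show "s \<in> lower (upper {x} \<inter> C)"
    proof (rule ccontr)
      assume "s \<notin> lower (upper {x} \<inter> C)"
      then have "(\<Inter>d\<in>D. upper {d}) \<inter> upper {x} \<subseteq> - C"
        using D INT_upper_singleton_eq upper_singleton_Int_subset_Compl by metis
      moreover have "openin scott_topology (- C)" "- C \<noteq> {}"
        using C closedin_scott_topology_Compl[of "- C"] by auto
      ultimately obtain d where "d \<in> D" "upper {d} \<inter> upper {x} \<subseteq> - C"
        using d_star D unfolding d_star_space_scott_topology by blast
      then show False
        using D upper_singleton_Int_subset_Compl by blast
    qed
  qed
next
  assume closed: "\<forall>(x::'a) (C::'a set). closedin scott_topology C \<and> C \<noteq> UNIV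
       \<longrightarrow> closedin scott_topology (lower (upper {x} \<inter> C))"
  show "d_star_space (scott_topology :: 'a topology)"
    unfolding d_star_space_scott_topology
  proof (intro allI impI)
    fix D and x :: 'a and U
    assume H: "directed D \<and> openin scott_topology U \<and> U \<noteq> {} \<and>
      (\<Inter>d\<in>D. upper {d}) \<inter> upper {x} \<subseteq> U"
    let ?L = "lower (upper {x} \<inter> - U)"
    obtain s where s: "is_sup D s"
      using assms H unfolding dcpo_def by blast
    have "s \<notin> ?L"
      using H INT_upper_singleton_eq[OF s] upper_singleton_Int_subset_Compl by (metis double_compl)
    moreover have "closedin scott_topology (- U)" "- U \<noteq> UNIV"
      using H by auto
    then have "closedin scott_topology ?L"
      using closed by blast
    ultimately obtain d where "d \<in> D" "d \<notin> ?L"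
      using H s unfolding closedin_scott_topology_lower by blast
    then show "\<exists>d\<in>D. upper {d} \<inter> upper {x} \<subseteq> U"
      using upper_singleton_Int_subset_Compl by (metis double_compl)
  qed
qed

text \<open>Since \<open>k \<notin> lower (upper {d} \<inter> C)\<close> iff \<open>d \<notin> lower (upper {k} \<inter> C)\<close>, the open sets
  \<open>- lower (upper {d} \<inter> C)\<close> with \<open>d \<in> D\<close> cover \<open>K\<close> once \<open>sup D \<notin> lower (K \<inter> C)\<close>;
  compactness then yields a single \<open>d \<in> D\<close> outside \<open>lower (K \<inter> C)\<close>.\<close>

lemma closedin_lower_compact_Int:
  fixes C :: "'a::order set"
  assumes closed: "\<And>x. closedin scott_topology (lower (upper {x} \<inter> C))"
    and K: "compactin scott_topology K" "upper K = K"
  shows "closedin scott_topology (lower (K \<inter> C))"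
  unfolding closedin_scott_topology_lower
proof (intro allI impI)
  fix D s assume D: "directed D \<and> D \<subseteq> lower (K \<inter> C) \<and> is_sup D s"
  show "s \<in> lower (K \<inter> C)"
  proof (rule ccontr)
    assume s: "s \<notin> lower (K \<inter> C)"
    define W where "W d = - lower (upper {d} \<inter> C)" for d
    have "mono W"
    proof (rule monoI)
      fix d e :: 'a assume "d \<le> e"
      then have "lower (upper {e} \<inter> C) \<subseteq> lower (upper {d} \<inter> C)"
        unfolding subset_iff mem_lower_upper_singleton_Int by (meson order_trans)
      then show "W d \<subseteq> W e"
        unfolding W_def by blast
    qed
    have open_W: "openin scott_topology (W d)" for d
      using closedin_scott_topology_Compl[of "W d"] closed[of d] unfolding W_def by simp
    have "K \<subseteq> \<Union> (W ` D)"
    proof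
      fix k assume "k \<in> K"
      have "s \<notin> lower (upper {k} \<inter> C)"
      proof
        assume "s \<in> lower (upper {k} \<inter> C)"
        then obtain c where "c \<in> C" "s \<le> c" "k \<le> c"
          unfolding mem_lower_upper_singleton_Int by blast
        moreover have "c \<in> K"
          using mem_if_upper_eq[OF K(2) \<open>k \<in> K\<close> \<open>k \<le> c\<close>] .
        ultimately show False
          using s unfolding lower_def by blast
      qed
      then obtain d where "d \<in> D" "d \<notin> lower (upper {k} \<inter> C)"
        using closed[of k] D unfolding closedin_scott_topology_lower by blast
      then have "k \<in> W d"
        unfolding W_def Compl_iff mem_lower_upper_singleton_Int by blast
      with \<open>d \<in> D\<close> show "k \<in> \<Union> (W ` D)"
        by blast
    qed
    then obtain d where "d \<in> D" "K \<subseteq> W d"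
      using compactin_directed_cover[OF K(1) _ \<open>mono W\<close> open_W] D by blast
    have "d \<in> lower (K \<inter> C)"
      using D \<open>d \<in> D\<close> by blast
    then obtain y where "d \<le> y" "y \<in> K" "y \<in> C"
      unfolding lower_def by blast
    then have "y \<in> lower (upper {d} \<inter> C)"
      unfolding mem_lower_upper_singleton_Int by (blast intro: order_refl)
    with \<open>K \<subseteq> W d\<close> \<open>y \<in> K\<close> show False
      unfolding W_def by blast
  qed
qed

lemma closedin_lower_upper_Int_iff_compact_Int:
  "(\<forall>(x::'a::order) (C::'a set). closedin scott_topology C \<and> C \<noteq> UNIV
       \<longrightarrow> closedin scott_topology (lower (upper {x} \<inter> C))) \<longleftrightarrow>
   (\<forall>K (C::'a set). K \<in> KX scott_topology \<and> closedin scott_topology C \<and> C \<noteq> UNIV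
       \<longrightarrow> closedin scott_topology (lower (K \<inter> C)))"
proof
  assume "\<forall>K (C::'a set). K \<in> KX scott_topology \<and> closedin scott_topology C \<and> C \<noteq> UNIV
    \<longrightarrow> closedin scott_topology (lower (K \<inter> C))"
  then show "\<forall>(x::'a) (C::'a set). closedin scott_topology C \<and> C \<noteq> UNIV
    \<longrightarrow> closedin scott_topology (lower (upper {x} \<inter> C))"
    using upper_singleton_in_KX by blast
next
  assume single: "\<forall>(x::'a) (C::'a set). closedin scott_topology C \<and> C \<noteq> UNIV
    \<longrightarrow> closedin scott_topology (lower (upper {x} \<inter> C))"
  show "\<forall>K (C::'a set). K \<in> KX scott_topology \<and> closedin scott_topology C \<and> C \<noteq> UNIV
    \<longrightarrow> closedin scott_topology (lower (K \<inter> C))"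
  proof (intro allI impI)
    fix K C :: "'a set"
    assume KC: "K \<in> KX scott_topology \<and> closedin scott_topology C \<and> C \<noteq> UNIV"
    then have "closedin scott_topology (lower (upper {x} \<inter> C))" for x
      using single by blast
    moreover have "compactin scott_topology K" "upper K = K"
      using KC by (auto simp: KX_scott_topology)
    ultimately show "closedin scott_topology (lower (K \<inter> C))"
      by (rule closedin_lower_compact_Int)
  qed
qed

lemma S_star_well_filteredD:
  assumes "S_star_well_filtered X" "\<K> \<subseteq> KX X" "filtered_family \<K>" "G \<in> KX X"
    and "openin X U" "U \<noteq> {}" "\<Inter>\<K> \<inter> G \<subseteq> U"
  shows "\<exists>K\<in>\<K>. K \<inter> G \<subseteq> U"
  using assms unfolding S_star_well_filtered_def by blast

lemma d_star_space_if_S_star_well_filtered: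
  assumes "S_star_well_filtered (scott_topology :: 'a::order topology)"
  shows "d_star_space (scott_topology :: 'a topology)"
  unfolding d_star_space_scott_topology
proof (intro allI impI)
  fix D and x :: 'a and U
  assume H: "directed D \<and> openin scott_topology U \<and> U \<noteq> {} \<and>
    (\<Inter>d\<in>D. upper {d}) \<inter> upper {x} \<subseteq> U"
  have "(\<lambda>d. upper {d}) ` D \<subseteq> KX scott_topology"
    using upper_singleton_in_KX by blast
  moreover have "\<Inter> ((\<lambda>d. upper {d}) ` D) \<inter> upper {x} \<subseteq> U"
    using H by simp
  ultimately have "\<exists>K\<in>(\<lambda>d. upper {d}) ` D. K \<inter> upper {x} \<subseteq> U"
    using H by (intro S_star_well_filteredD[OF assms _ filtered_family_upper_singletons
          upper_singleton_in_KX]) auto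
  then show "\<exists>d\<in>D. upper {d} \<inter> upper {x} \<subseteq> U"
    by blast
qed

text \<open>By minimality, \<open>F \<subseteq> lower (K \<inter> F)\<close> for \<open>K \<in> \<K>\<close> and \<open>F \<subseteq> lower (upper {a} \<inter> F)\<close>
  for \<open>a \<in> F\<close>; so \<open>F\<close> is directed and its supremum lies in every \<open>K \<in> \<K>\<close>.\<close>

lemma minimal_closed_meets_Inter:
  fixes F :: "'a::order set"
  assumes dcpo: "dcpo TYPE('a)"
    and closed_lower: "\<And>K C. K \<in> KX scott_topology \<Longrightarrow> closedin scott_topology C \<Longrightarrow> C \<noteq> UNIV
      \<Longrightarrow> closedin scott_topology (lower (K \<inter> (C::'a set)))"
    and \<K>: "\<K> \<subseteq> KX scott_topology" "filtered_family \<K>"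
    and F: "closedin scott_topology F" "F \<noteq> UNIV" "\<forall>K\<in>\<K>. F \<inter> K \<noteq> {}"
    and minimal: "\<And>B. closedin scott_topology B \<Longrightarrow> B \<subseteq> F \<Longrightarrow> \<forall>K\<in>\<K>. B \<inter> K \<noteq> {} \<Longrightarrow> B = F"
  shows "F \<inter> \<Inter>\<K> \<noteq> {}"
proof -
  have subset_lower_Int: "F \<subseteq> lower (Q \<inter> F)"
    if "Q \<in> KX scott_topology" "\<forall>K\<in>\<K>. lower (Q \<inter> F) \<inter> K \<noteq> {}" for Q
  proof -
    have "lower (Q \<inter> F) \<subseteq> F"
      using F(1) by (rule lower_subset_closedin_scott_topology) blast
    then show ?thesis
      using minimal[OF closed_lower[OF that(1) F(1,2)] _ that(2)] by simp
  qed
  have below_K: "F \<subseteq> lower (K \<inter> F)" if K: "K \<in> \<K>" for K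
  proof (rule subset_lower_Int)
    show "K \<in> KX scott_topology"
      using \<K>(1) K by blast
    show "\<forall>K'\<in>\<K>. lower (K \<inter> F) \<inter> K' \<noteq> {}"
    proof
      fix K' assume "K' \<in> \<K>"
      then obtain K'' where "K'' \<in> \<K>" "K'' \<subseteq> K" "K'' \<subseteq> K'"
        using \<K>(2) K unfolding filtered_family_def by blast
      then obtain z where "z \<in> F" "z \<in> K''"
        using F(3) by blast
      then have "z \<in> lower (K \<inter> F) \<inter> K'"
        using \<open>K'' \<subseteq> K\<close> \<open>K'' \<subseteq> K'\<close> unfolding lower_def by (blast intro: order_refl)
      then show "lower (K \<inter> F) \<inter> K' \<noteq> {}"
        by blast
    qed
  qed
  have below_upper: "F \<subseteq> lower (upper {a} \<inter> F)" if a: "a \<in> F" for a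
  proof (rule subset_lower_Int)
    show "upper {a} \<in> KX scott_topology"
      by (rule upper_singleton_in_KX)
    show "\<forall>K\<in>\<K>. lower (upper {a} \<inter> F) \<inter> K \<noteq> {}"
    proof
      fix K assume "K \<in> \<K>"
      then obtain k where "a \<le> k" "k \<in> K" "k \<in> F"
        using below_K a unfolding lower_def by blast
      then have "k \<in> lower (upper {a} \<inter> F)"
        unfolding mem_lower_upper_singleton_Int by (blast intro: order_refl)
      then show "lower (upper {a} \<inter> F) \<inter> K \<noteq> {}"
        using \<open>k \<in> K\<close> by blast
    qed
  qed
  have "directed F"
    unfolding directed_def
  proof (intro conjI ballI)
    show "F \<noteq> {}"
      using F(3) \<K>(2) unfolding filtered_family_def by blast
  next
    fix a b assume "a \<in> F" "b \<in> F"
    then have "b \<in> lower (upper {a} \<inter> F)"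
      using below_upper by blast
    then show "\<exists>c\<in>F. a \<le> c \<and> b \<le> c"
      unfolding mem_lower_upper_singleton_Int by blast
  qed
  then obtain s where s: "is_sup F s"
    using dcpo unfolding dcpo_def by blast
  then have "s \<in> F"
    using F(1) \<open>directed F\<close> unfolding closedin_scott_topology by blast
  moreover have "s \<in> K" if K: "K \<in> \<K>" for K
  proof -
    obtain k where "s \<le> k" "k \<in> K" "k \<in> F"
      using below_K[OF K] \<open>s \<in> F\<close> unfolding lower_def by blast
    moreover have "k \<le> s"
      using s \<open>k \<in> F\<close> unfolding is_sup_def by blast
    ultimately show ?thesis
      using order_antisym by metis
  qed
  ultimately show ?thesis
    by blast
qed

lemma S_star_well_filtered_scott_topologyI:
  assumes dcpo: "dcpo TYPE('a::order)"
    and closed_lower: "\<And>K C. K \<in> KX scott_topology \<Longrightarrow> closedin scott_topology C \<Longrightarrow> C \<noteq> UNIV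
      \<Longrightarrow> closedin scott_topology (lower (K \<inter> (C::'a set)))"
  shows "S_star_well_filtered (scott_topology :: 'a topology)"
  unfolding S_star_well_filtered_def
proof (intro allI impI, elim conjE)
  fix \<K> G and U :: "'a set"
  assume \<K>: "\<K> \<subseteq> KX scott_topology" "filtered_family \<K>" and G: "G \<in> KX scott_topology"
    and U: "openin scott_topology U" "U \<noteq> {}" and Inter_subset: "\<Inter>\<K> \<inter> G \<subseteq> U"
  show "\<exists>K\<in>\<K>. K \<inter> G \<subseteq> U"
  proof (rule ccontr)
    assume no_K: "\<not> (\<exists>K\<in>\<K>. K \<inter> G \<subseteq> U)"
    define A where "A = lower (G \<inter> - U)"
    have "closedin scott_topology A"
      unfolding A_def using G U by (intro closed_lower) auto
    have "A \<subseteq> - U"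
      unfolding A_def using U by (intro lower_subset_closedin_scott_topology) auto
    have meets: "\<forall>K\<in>\<K>. A \<inter> K \<noteq> {}"
    proof
      fix K assume "K \<in> \<K>"
      then obtain y where "y \<in> K" "y \<in> G" "y \<notin> U"
        using no_K by blast
      then have "y \<in> A \<inter> K"
        unfolding A_def lower_def by (blast intro: order_refl)
      then show "A \<inter> K \<noteq> {}"
        by blast
    qed
    have compact: "compactin scott_topology K" and upper: "upper K = K" if "K \<in> \<K>" for K
      using \<K>(1) that by (auto simp: KX_scott_topology)
    obtain F where F: "closedin scott_topology F" "F \<subseteq> A" "\<forall>K\<in>\<K>. F \<inter> K \<noteq> {}"
      and minimal: "\<And>B. closedin scott_topology B \<Longrightarrow> B \<subseteq> F \<Longrightarrow> \<forall>K\<in>\<K>. B \<inter> K \<noteq> {} \<Longrightarrow> B = F"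
      using closedin_minimal_meeting_compacts[OF compact \<open>closedin scott_topology A\<close> meets] by metis
    have "F \<noteq> UNIV"
      using \<open>F \<subseteq> A\<close> \<open>A \<subseteq> - U\<close> U(2) by blast
    then obtain s where "s \<in> F" "s \<in> \<Inter>\<K>"
      using minimal_closed_meets_Inter[OF dcpo closed_lower \<K> F(1) _ F(3) minimal] by blast
    then obtain g where "s \<le> g" "g \<in> G" "g \<notin> U"
      using \<open>F \<subseteq> A\<close> unfolding A_def lower_def by blast
    have "g \<in> K" if "K \<in> \<K>" for K
      using mem_if_upper_eq[OF upper[OF that]] \<open>s \<in> \<Inter>\<K>\<close> \<open>s \<le> g\<close> that by blast
    then show False
      using Inter_subset \<open>g \<in> G\<close> \<open>g \<notin> U\<close> by blast
  qed
qed

theorem mainTheorem12: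
  assumes "dcpo TYPE('a::order)"
  shows "(d_star_space (scott_topology :: 'a topology)
            \<longleftrightarrow> (\<forall>(x::'a) C. closedin scott_topology C \<and> C \<noteq> UNIV
                   \<longrightarrow> closedin scott_topology (lower (upper {x} \<inter> C))))
       \<and> (d_star_space (scott_topology :: 'a topology)
            \<longleftrightarrow> (\<forall>K (C::'a set). K \<in> KX scott_topology \<and> closedin scott_topology C \<and> C \<noteq> UNIV
                   \<longrightarrow> closedin scott_topology (lower (K \<inter> C))))
       \<and> (d_star_space (scott_topology :: 'a topology)
            \<longleftrightarrow> S_star_well_filtered (scott_topology :: 'a topology))"
proof -
  note d_star_iff_singleton = d_star_space_iff_closedin_lower_upper_Int[OF assms]
  note d_star_iff_compact =
    d_star_iff_singleton[unfolded closedin_lower_upper_Int_iff_compact_Int]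
  have "d_star_space (scott_topology :: 'a topology) \<longleftrightarrow>
    S_star_well_filtered (scott_topology :: 'a topology)"
  proof
    assume "d_star_space (scott_topology :: 'a topology)"
    then show "S_star_well_filtered (scott_topology :: 'a topology)"
      using d_star_iff_compact by (intro S_star_well_filtered_scott_topologyI[OF assms]) blast
  qed (rule d_star_space_if_S_star_well_filtered)
  with d_star_iff_singleton d_star_iff_compact show ?thesis
    by blast
qed

end
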